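(* Let $\ell,k$ be integers with $k>2$ and $\ell>6$, and let $t>0$ be real with $T=\lfloor tk\rfloor$. Let $B_{\ell,k}$ be the graph constructed as follows: for each $1\le r\le k$ take disjoint paths $x_{0,r}x_{1,r}\cdots x_{\ell+1,r}$ and $y_{0,r}y_{1,r}y_{2,r}y_{3,r}y_{4,r}y_{5,r}$; identify all $x_{0,r},y_{0,r}$ ($1\le r\le k$) into a single vertex $u$; identify all $x_{\ell+1,r},y_{5,r}$ into a single vertex $v$; identify $y_{2,1},\dots,y_{2,k}$ into a single vertex $y_{2,*}$ and $y_{3,1},\dots,y_{3,k}$ into a single vertex $y_{3,*}$ (so the $k$ edges $y_{2,r}y_{3,r}$ become the single edge $y_{2,*}y_{3,*}$). Let $H_{\ell,k,t}$ be obtained from $B_{\ell,k}$ by adding $T$ pendant vertices $u_1,\dots,u_T$ adjacent to $u$ and $T$ pendant vertices $v_1,\dots,v_T$ adjacent to $v$. Then the orbits on the vertex set of $H_{\ell,k,t}$ of the group of graph automorphisms fixing $u$ are $\{u_r\}_{r}$, $\{u\}$, $\{x_{1,r}\}_r,\dots,\{x_{\ell,r}\}_r$, $\{y_{1,r}\}_r$, $\{y_{2,*}\}$, $\{y_{3,*}\}$, $\{y_{4,r}\}_r$, $\{v\}$, $\{v_r\}_r$.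
   Context: A graph automorphism is a bijection of the vertex set preserving adjacency and non-adjacency. *)

theory Defs
  imports Complex_Main
begin

text \<open>Vertices of H_{l,k,t} after the identifications:
  U = u = x_{0,r} = y_{0,r};  V = v = x_{l+1,r} = y_{5,r};
  X i r = x_{i,r} (1 <= i <= l, 1 <= r <= k);  Y1 r = y_{1,r};  Y2 = y_{2,*};
  Y3 = y_{3,*};  Y4 r = y_{4,r};  PU r = u_r, PV r = v_r (1 <= r <= T).\<close>
datatype hvert = U | V | X nat nat | Y1 nat | Y2 | Y3 | Y4 nat | PU nat | PV nat

definition H_verts :: "nat \<Rightarrow> nat \<Rightarrow> nat \<Rightarrow> hvert set" where
  "H_verts l k T = {U, V, Y2, Y3}
     \<union> {X i r | i r. 1 \<le> i \<and> i \<le> l \<and> 1 \<le> r \<and> r \<le> k}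
     \<union> {Y1 r | r. 1 \<le> r \<and> r \<le> k} \<union> {Y4 r | r. 1 \<le> r \<and> r \<le> k}
     \<union> {PU r | r. 1 \<le> r \<and> r \<le> T} \<union> {PV r | r. 1 \<le> r \<and> r \<le> T}"

definition H_edges :: "nat \<Rightarrow> nat \<Rightarrow> nat \<Rightarrow> (hvert \<times> hvert) set" where
  "H_edges l k T =
        {(U, X 1 r) | r. 1 \<le> r \<and> r \<le> k}
      \<union> {(X i r, X (i+1) r) | i r. 1 \<le> i \<and> i < l \<and> 1 \<le> r \<and> r \<le> k}
      \<union> {(X l r, V) | r. 1 \<le> r \<and> r \<le> k}
      \<union> {(U, Y1 r) | r. 1 \<le> r \<and> r \<le> k}
      \<union> {(Y1 r, Y2) | r. 1 \<le> r \<and> r \<le> k}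
      \<union> {(Y2, Y3)}
      \<union> {(Y3, Y4 r) | r. 1 \<le> r \<and> r \<le> k}
      \<union> {(Y4 r, V) | r. 1 \<le> r \<and> r \<le> k}
      \<union> {(U, PU r) | r. 1 \<le> r \<and> r \<le> T}
      \<union> {(V, PV r) | r. 1 \<le> r \<and> r \<le> T}"

definition H_adj :: "nat \<Rightarrow> nat \<Rightarrow> nat \<Rightarrow> hvert \<Rightarrow> hvert \<Rightarrow> bool" where
  "H_adj l k T a b \<longleftrightarrow> (a, b) \<in> H_edges l k T \<or> (b, a) \<in> H_edges l k T"

definition graph_aut :: "'a set \<Rightarrow> ('a \<Rightarrow> 'a \<Rightarrow> bool) \<Rightarrow> ('a \<Rightarrow> 'a) \<Rightarrow> bool" where
  "graph_aut Vs E f \<longleftrightarrow> bij_betw f Vs Vs \<and>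
     (\<forall>a\<in>Vs. \<forall>b\<in>Vs. E a b \<longleftrightarrow> E (f a) (f b))"

definition stab_orbit :: "'a set \<Rightarrow> ('a \<Rightarrow> 'a \<Rightarrow> bool) \<Rightarrow> 'a \<Rightarrow> 'a \<Rightarrow> 'a set" where
  "stab_orbit Vs E x0 w = {f w | f. graph_aut Vs E f \<and> f x0 = x0}"

end

theory Submission
  imports Defs "HOL-Combinatorics.Permutations"
begin

text \<open>Relabelling the branch index r simultaneously on the paths x and y, and the indices of
  the pendant vertices at u and at v, gives automorphisms fixing u; so each claimed orbit lies
  in a single orbit. Conversely, u, v, y_{2,*} and y_{3,*} are the only vertices with at least
  three neighbours. An automorphism f fixing u maps y_{1,r} to a neighbour of u adjacent to
  another vertex of degree at least three, which must be some y_{1,s}: neither x_{1,s} (whose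
  other neighbour x_{2,s} has degree two) nor a pendant vertex qualifies. Hence f fixes
  y_{2,*}, then y_{3,*}, and permutes the y_{4,r}. The x_{1,r} are the remaining neighbours of
  u with a second neighbour, and walking along the paths f maps each path x_{.,r} onto some
  path x_{.,s}, so f fixes v and permutes the pendant vertices at u and at v.\<close>

definition has_three_neighbours :: "'a set \<Rightarrow> ('a \<Rightarrow> 'a \<Rightarrow> bool) \<Rightarrow> 'a \<Rightarrow> bool" where
  "has_three_neighbours Vs E a \<longleftrightarrow>
     (\<exists>b1\<in>Vs. \<exists>b2\<in>Vs. \<exists>b3\<in>Vs. b1 \<noteq> b2 \<and> b1 \<noteq> b3 \<and> b2 \<noteq> b3 \<and> E a b1 \<and> E a b2 \<and> E a b3)"

lemma not_has_three_neighboursI: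
  assumes "\<And>b. E a b \<Longrightarrow> b = p \<or> b = q"
  shows "\<not> has_three_neighbours Vs E a"
  using assms unfolding has_three_neighbours_def by metis

lemma graph_autI:
  assumes "\<And>a. a \<in> Vs \<Longrightarrow> f a \<in> Vs" and "\<And>a. a \<in> Vs \<Longrightarrow> g a \<in> Vs"
    and "\<And>a. a \<in> Vs \<Longrightarrow> g (f a) = a" and "\<And>a. a \<in> Vs \<Longrightarrow> f (g a) = a"
    and "\<And>a b. E a b \<Longrightarrow> E (f a) (f b)" and "\<And>a b. E a b \<Longrightarrow> E (g a) (g b)"
  shows "graph_aut Vs E f"
proof -
  have "bij_betw f Vs Vs"
    by (rule bij_betw_byWitness[where f' = g]) (use assms(1-4) in auto)
  moreover have "E a b \<longleftrightarrow> E (f a) (f b)" if "a \<in> Vs" "b \<in> Vs" for a b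
    using assms(5)[of a b] assms(6)[of "f a" "f b"] assms(3) that by auto
  ultimately show ?thesis
    unfolding graph_aut_def by blast
qed

lemma stab_orbit_eqI:
  assumes "\<And>f. graph_aut Vs E f \<Longrightarrow> f x0 = x0 \<Longrightarrow> f w \<in> S"
    and "\<And>x. x \<in> S \<Longrightarrow> \<exists>f. graph_aut Vs E f \<and> f x0 = x0 \<and> f w = x"
  shows "stab_orbit Vs E x0 w = S"
  unfolding stab_orbit_def using assms by blast

lemma stab_orbit_eq_singleton:
  assumes "\<And>f. graph_aut Vs E f \<Longrightarrow> f x0 = x0 \<Longrightarrow> f w = w"
  shows "stab_orbit Vs E x0 w = {w}"
proof (rule stab_orbit_eqI)
  show "\<exists>f. graph_aut Vs E f \<and> f x0 = x0 \<and> f w = x" if "x \<in> {w}" for x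
    using that by (intro exI[of _ id]) (auto simp: graph_aut_def)
qed (use assms in blast)

locale graph_automorphism =
  fixes Vs :: "'a set" and E :: "'a \<Rightarrow> 'a \<Rightarrow> bool" and f :: "'a \<Rightarrow> 'a"
  assumes aut: "graph_aut Vs E f"
begin

lemma in_verts: "a \<in> Vs \<Longrightarrow> f a \<in> Vs"
  using aut unfolding graph_aut_def bij_betw_def by blast

lemma inj: "a \<in> Vs \<Longrightarrow> b \<in> Vs \<Longrightarrow> f a = f b \<longleftrightarrow> a = b"
  using aut unfolding graph_aut_def bij_betw_def inj_on_def by blast

lemma adj_iff: "a \<in> Vs \<Longrightarrow> b \<in> Vs \<Longrightarrow> E (f a) (f b) \<longleftrightarrow> E a b"
  using aut unfolding graph_aut_def by blast

lemma neighbour_preimage: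
  assumes "a \<in> Vs" "c \<in> Vs" "E (f a) c"
  obtains b where "b \<in> Vs" "E a b" "f b = c"
proof -
  have "c \<in> f ` Vs"
    using aut assms(2) unfolding graph_aut_def bij_betw_def by simp
  then obtain b where b: "b \<in> Vs" "f b = c"
    by blast
  then have "E a b"
    using adj_iff[OF assms(1) b(1)] assms(3) by simp
  with b show ?thesis
    using that by blast
qed

lemma has_three_neighbours_iff:
  assumes "a \<in> Vs"
  shows "has_three_neighbours Vs E (f a) \<longleftrightarrow> has_three_neighbours Vs E a"
proof
  assume "has_three_neighbours Vs E (f a)"
  then obtain c1 c2 c3 where c: "c1 \<in> Vs" "c2 \<in> Vs" "c3 \<in> Vs" "c1 \<noteq> c2" "c1 \<noteq> c3" "c2 \<noteq> c3"
      "E (f a) c1" "E (f a) c2" "E (f a) c3"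
    unfolding has_three_neighbours_def by blast
  obtain b1 where b1: "b1 \<in> Vs" "E a b1" "f b1 = c1"
    using neighbour_preimage[OF assms c(1) c(7)] .
  obtain b2 where b2: "b2 \<in> Vs" "E a b2" "f b2 = c2"
    using neighbour_preimage[OF assms c(2) c(8)] .
  obtain b3 where b3: "b3 \<in> Vs" "E a b3" "f b3 = c3"
    using neighbour_preimage[OF assms c(3) c(9)] .
  have "b1 \<noteq> b2" "b1 \<noteq> b3" "b2 \<noteq> b3"
    using b1(3) b2(3) b3(3) c(4-6) by auto
  then show "has_three_neighbours Vs E a"
    unfolding has_three_neighbours_def using b1(1,2) b2(1,2) b3(1,2) by blast
next
  assume "has_three_neighbours Vs E a"
  then obtain b1 b2 b3 where b: "b1 \<in> Vs" "b2 \<in> Vs" "b3 \<in> Vs" "b1 \<noteq> b2" "b1 \<noteq> b3" "b2 \<noteq> b3"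
      "E a b1" "E a b2" "E a b3"
    unfolding has_three_neighbours_def by blast
  then have "f b1 \<noteq> f b2" "f b1 \<noteq> f b3" "f b2 \<noteq> f b3"
    by (simp_all add: inj)
  moreover have "E (f a) (f b1)" "E (f a) (f b2)" "E (f a) (f b3)"
    using b assms by (simp_all add: adj_iff)
  ultimately show "has_three_neighbours Vs E (f a)"
    unfolding has_three_neighbours_def using b(1-3) in_verts by blast
qed

end

lemma H_verts_simps [simp]:
  "U \<in> H_verts l k T" "V \<in> H_verts l k T" "Y2 \<in> H_verts l k T" "Y3 \<in> H_verts l k T"
  "X i r \<in> H_verts l k T \<longleftrightarrow> 1 \<le> i \<and> i \<le> l \<and> 1 \<le> r \<and> r \<le> k"
  "Y1 r \<in> H_verts l k T \<longleftrightarrow> 1 \<le> r \<and> r \<le> k"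
  "Y4 r \<in> H_verts l k T \<longleftrightarrow> 1 \<le> r \<and> r \<le> k"
  "PU r \<in> H_verts l k T \<longleftrightarrow> 1 \<le> r \<and> r \<le> T"
  "PV r \<in> H_verts l k T \<longleftrightarrow> 1 \<le> r \<and> r \<le> T"
  by (auto simp: H_verts_def)

lemma H_adj_U_iff:
  "H_adj l k T U w \<longleftrightarrow>
     (\<exists>r. 1 \<le> r \<and> r \<le> k \<and> (w = X 1 r \<or> w = Y1 r)) \<or> (\<exists>r. 1 \<le> r \<and> r \<le> T \<and> w = PU r)"
  by (cases w) (auto simp: H_adj_def H_edges_def)

lemma H_adj_V_iff:
  "1 \<le> l \<Longrightarrow> H_adj l k T V w \<longleftrightarrow>
     (\<exists>r. 1 \<le> r \<and> r \<le> k \<and> (w = X l r \<or> w = Y4 r)) \<or> (\<exists>r. 1 \<le> r \<and> r \<le> T \<and> w = PV r)"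
  by (cases w) (auto simp: H_adj_def H_edges_def)

lemma H_adj_X_iff:
  "1 \<le> i \<Longrightarrow> i \<le> l \<Longrightarrow> 1 \<le> s \<Longrightarrow> s \<le> k \<Longrightarrow> H_adj l k T (X i s) w \<longleftrightarrow>
     (i < l \<and> w = X (i + 1) s) \<or> (1 < i \<and> w = X (i - 1) s) \<or> (i = 1 \<and> w = U) \<or> (i = l \<and> w = V)"
  by (cases w) (auto simp: H_adj_def H_edges_def)

lemma H_adj_Y1_iff: "1 \<le> s \<Longrightarrow> s \<le> k \<Longrightarrow> H_adj l k T (Y1 s) w \<longleftrightarrow> w = U \<or> w = Y2"
  by (cases w) (auto simp: H_adj_def H_edges_def)

lemma H_adj_Y2_iff: "H_adj l k T Y2 w \<longleftrightarrow> (\<exists>r. 1 \<le> r \<and> r \<le> k \<and> w = Y1 r) \<or> w = Y3"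
  by (cases w) (auto simp: H_adj_def H_edges_def)

lemma H_adj_Y3_iff: "H_adj l k T Y3 w \<longleftrightarrow> (\<exists>r. 1 \<le> r \<and> r \<le> k \<and> w = Y4 r) \<or> w = Y2"
  by (cases w) (auto simp: H_adj_def H_edges_def)

lemma H_adj_Y4_iff: "1 \<le> s \<Longrightarrow> s \<le> k \<Longrightarrow> H_adj l k T (Y4 s) w \<longleftrightarrow> w = V \<or> w = Y3"
  by (cases w) (auto simp: H_adj_def H_edges_def)

lemma H_adj_PU_iff: "1 \<le> s \<Longrightarrow> s \<le> T \<Longrightarrow> H_adj l k T (PU s) w \<longleftrightarrow> w = U"
  by (cases w) (auto simp: H_adj_def H_edges_def)

lemma H_adj_PV_iff: "1 \<le> s \<Longrightarrow> s \<le> T \<Longrightarrow> H_adj l k T (PV s) w \<longleftrightarrow> w = V"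
  by (cases w) (auto simp: H_adj_def H_edges_def)

lemma has_three_neighbours_Y2:
  assumes "2 \<le> k"
  shows "has_three_neighbours (H_verts l k T) (H_adj l k T) Y2"
proof -
  have "H_adj l k T Y2 (Y1 1)" "H_adj l k T Y2 (Y1 2)" "H_adj l k T Y2 Y3"
    using assms by (auto simp: H_adj_Y2_iff)
  moreover have "Y1 1 \<in> H_verts l k T" "Y1 2 \<in> H_verts l k T"
    using assms by simp_all
  ultimately show ?thesis
    unfolding has_three_neighbours_def
    by (intro bexI[of _ "Y1 1"] bexI[of _ "Y1 2"] bexI[of _ Y3]) simp_all
qed

lemma has_three_neighbours_Y3:
  assumes "2 \<le> k"
  shows "has_three_neighbours (H_verts l k T) (H_adj l k T) Y3"
proof -
  have "H_adj l k T Y3 (Y4 1)" "H_adj l k T Y3 (Y4 2)" "H_adj l k T Y3 Y2"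
    using assms by (auto simp: H_adj_Y3_iff)
  moreover have "Y4 1 \<in> H_verts l k T" "Y4 2 \<in> H_verts l k T"
    using assms by simp_all
  ultimately show ?thesis
    unfolding has_three_neighbours_def
    by (intro bexI[of _ "Y4 1"] bexI[of _ "Y4 2"] bexI[of _ Y2]) simp_all
qed

lemma not_has_three_neighbours_X:
  assumes "1 \<le> i" "i \<le> l" "1 \<le> s" "s \<le> k"
  shows "\<not> has_three_neighbours (H_verts l k T) (H_adj l k T) (X i s)"
proof (rule not_has_three_neighboursI)
  fix b
  assume "H_adj l k T (X i s) b"
  then show "b = (if i = 1 then U else X (i - 1) s) \<or> b = (if i = l then V else X (i + 1) s)"
    using assms by (simp add: H_adj_X_iff) (elim disjE conjE; simp)
qed

lemma not_has_three_neighbours_Y1: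
  "1 \<le> s \<Longrightarrow> s \<le> k \<Longrightarrow> \<not> has_three_neighbours (H_verts l k T) (H_adj l k T) (Y1 s)"
  by (rule not_has_three_neighboursI[where p = U and q = Y2]) (simp add: H_adj_Y1_iff)

subsection \<open>Automorphisms of H fixing u\<close>

locale H_stabiliser = graph_automorphism "H_verts l k T" "H_adj l k T" f
  for l k T :: nat and f :: "hvert \<Rightarrow> hvert" +
  assumes k_ge_2: "2 \<le> k" and l_ge_2: "2 \<le> l" and fix_U: "f U = U"
begin

lemma f_Y1: assumes "1 \<le> r" "r \<le> k" obtains s where "1 \<le> s" "s \<le> k" "f (Y1 r) = Y1 s"
proof -
  have "H_adj l k T U (f (Y1 r))"
    using adj_iff[of U "Y1 r"] fix_U assms by (simp add: H_adj_U_iff)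
  then consider s where "1 \<le> s" "s \<le> k" "f (Y1 r) = X 1 s"
    | s where "1 \<le> s" "s \<le> k" "f (Y1 r) = Y1 s" | s where "1 \<le> s" "s \<le> T" "f (Y1 r) = PU s"
    unfolding H_adj_U_iff by blast
  moreover have Y2_adj: "H_adj l k T (f (Y1 r)) (f Y2)"
    using adj_iff[of "Y1 r" Y2] assms by (simp add: H_adj_Y1_iff)
  moreover have "f Y2 \<noteq> U"
    using inj[of Y2 U] fix_U by simp
  moreover have "has_three_neighbours (H_verts l k T) (H_adj l k T) (f Y2)"
    using has_three_neighbours_iff has_three_neighbours_Y2 k_ge_2 by simp
  ultimately show ?thesis
  proof cases
    case (1 s)
    \<comment> \<open>then f y_{2,*} would be x_{2,s}, which has only two neighbours\<close>
    then have "f Y2 = X 2 s"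
      using Y2_adj \<open>f Y2 \<noteq> U\<close> l_ge_2 by (auto simp: H_adj_X_iff)
    then show ?thesis
      using \<open>has_three_neighbours _ _ (f Y2)\<close> not_has_three_neighbours_X[of 2 l s k T] 1 l_ge_2
      by simp
  next
    case (3 s)
    then show ?thesis
      using Y2_adj \<open>f Y2 \<noteq> U\<close> by (simp add: H_adj_PU_iff)
  qed (use that in blast)
qed

lemma f_Y2: "f Y2 = Y2"
proof -
  obtain s where s: "1 \<le> s" "s \<le> k" "f (Y1 1) = Y1 s"
    using f_Y1[of 1] k_ge_2 by auto
  have "H_adj l k T (Y1 s) (f Y2)"
    using adj_iff[of "Y1 1" Y2] s k_ge_2 by (auto simp: H_adj_Y1_iff)
  moreover have "f Y2 \<noteq> U"
    using inj[of Y2 U] fix_U by auto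
  ultimately show ?thesis
    using s by (auto simp: H_adj_Y1_iff)
qed

lemma f_Y3: "f Y3 = Y3"
proof -
  have "H_adj l k T Y2 (f Y3)"
    using adj_iff[of Y2 Y3] f_Y2 by (auto simp: H_adj_Y2_iff)
  moreover have "has_three_neighbours (H_verts l k T) (H_adj l k T) (f Y3)"
    using has_three_neighbours_iff has_three_neighbours_Y3 k_ge_2 by simp
  ultimately show ?thesis
    using not_has_three_neighbours_Y1 by (auto simp: H_adj_Y2_iff)
qed

lemma f_Y4: assumes "1 \<le> r" "r \<le> k" obtains s where "1 \<le> s" "s \<le> k" "f (Y4 r) = Y4 s"
proof -
  have "H_adj l k T Y3 (f (Y4 r))"
    using adj_iff[of Y3 "Y4 r"] f_Y3 assms by (auto simp: H_adj_Y3_iff)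
  moreover have "f (Y4 r) \<noteq> Y2"
    using inj[of "Y4 r" Y2] f_Y2 assms by auto
  ultimately show ?thesis
    using that by (auto simp: H_adj_Y3_iff)
qed

lemma f_X1: assumes "1 \<le> r" "r \<le> k" obtains s where "1 \<le> s" "s \<le> k" "f (X 1 r) = X 1 s"
proof -
  have "H_adj l k T U (f (X 1 r))"
    using adj_iff[of U "X 1 r"] fix_U assms l_ge_2 by (simp add: H_adj_U_iff)
  then consider s where "1 \<le> s" "s \<le> k" "f (X 1 r) = X 1 s"
    | s where "1 \<le> s" "s \<le> k" "f (X 1 r) = Y1 s" | s where "1 \<le> s" "s \<le> T" "f (X 1 r) = PU s"
    unfolding H_adj_U_iff by blast
  then show ?thesis
  proof cases
    case (2 s)
    have "\<not> H_adj l k T (f (X 1 r)) (f Y2)"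
      using adj_iff[of "X 1 r" Y2] assms l_ge_2 by (simp add: H_adj_X_iff)
    then show ?thesis
      using 2 f_Y2 by (simp add: H_adj_Y1_iff)
  next
    case (3 s)
    have "H_adj l k T (f (X 1 r)) (f (X 2 r))"
      using adj_iff[of "X 1 r" "X 2 r"] assms l_ge_2 by (simp add: H_adj_X_iff)
    moreover have "f (X 2 r) \<noteq> U"
      using inj[of "X 2 r" U] fix_U assms l_ge_2 by simp
    ultimately show ?thesis
      using 3 by (simp add: H_adj_PU_iff)
  qed (use that in blast)
qed

lemma f_X_path:
  assumes "1 \<le> r" "r \<le> k"
  obtains s where "1 \<le> s" "s \<le> k" "\<forall>i\<in>{1..l}. f (X i r) = X i s"
proof -
  have "\<exists>s. 1 \<le> s \<and> s \<le> k \<and> (\<forall>j\<in>{1..i}. f (X j r) = X j s)" if "1 \<le> i" "i \<le> l" for i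
    using that
  proof (induction i rule: nat_induct_at_least)
    case base
    obtain s where "1 \<le> s" "s \<le> k" "f (X 1 r) = X 1 s"
      using f_X1[OF assms] .
    then show ?case
      by auto
  next
    case (Suc i)
    obtain s where s: "1 \<le> s" "s \<le> k" and path: "\<forall>j\<in>{1..i}. f (X j r) = X j s"
      using Suc.IH Suc.prems by auto
    have "H_adj l k T (X i s) (f (X (Suc i) r))"
      using adj_iff[of "X i r" "X (Suc i) r"] path assms Suc.hyps Suc.prems
      by (simp add: H_adj_X_iff)
    moreover have "f (X (Suc i) r) \<noteq> X (i - 1) s" if "1 < i"
    proof -
      have "1 \<le> i - 1" "i - 1 \<le> l" "Suc i \<noteq> i - 1"
        using that Suc.prems by auto
      then have "f (X (Suc i) r) \<noteq> f (X (i - 1) r)"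
        using inj[of "X (Suc i) r" "X (i - 1) r"] assms Suc.prems by simp
      moreover have "f (X (i - 1) r) = X (i - 1) s"
        using path that by simp
      ultimately show ?thesis
        by simp
    qed
    moreover have "f (X (Suc i) r) \<noteq> U"
      using inj[of "X (Suc i) r" U] fix_U assms Suc by simp
    ultimately have "f (X (Suc i) r) = X (Suc i) s"
      using s Suc.hyps Suc.prems by (auto simp: H_adj_X_iff)
    then have "\<forall>j\<in>{1..Suc i}. f (X j r) = X j s"
      using path by (simp add: atLeastAtMostSuc_conv Suc.hyps)
    then show ?case
      using s by blast
  qed
  from this[of l] obtain s where "1 \<le> s" "s \<le> k" "\<forall>i\<in>{1..l}. f (X i r) = X i s"
    using l_ge_2 by auto
  then show ?thesis
    by (rule that)
qed

lemma f_X: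
  assumes "1 \<le> i" "i \<le> l" "1 \<le> r" "r \<le> k"
  obtains s where "1 \<le> s" "s \<le> k" "f (X i r) = X i s"
proof -
  obtain s where "1 \<le> s" "s \<le> k" "\<forall>i\<in>{1..l}. f (X i r) = X i s"
    using f_X_path[OF assms(3,4)] by blast
  then show ?thesis
    using that assms(1,2) by simp
qed

lemma f_V: "f V = V"
proof -
  obtain s where s: "1 \<le> s" "s \<le> k" and path: "\<forall>i\<in>{1..l}. f (X i 1) = X i s"
    using f_X_path[of 1] k_ge_2 by auto
  have "f (X l 1) = X l s" "f (X (l - 1) 1) = X (l - 1) s"
    using path l_ge_2 by auto
  moreover have "f V \<noteq> f (X (l - 1) 1)"
    using inj[of V "X (l - 1) 1"] l_ge_2 k_ge_2 by auto
  moreover have "H_adj l k T (f (X l 1)) (f V)"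
    using adj_iff[of "X l 1" V] l_ge_2 k_ge_2 by (simp add: H_adj_X_iff)
  ultimately show ?thesis
    using s l_ge_2 by (auto simp: H_adj_X_iff)
qed

lemma f_PU: assumes "1 \<le> r" "r \<le> T" obtains s where "1 \<le> s" "s \<le> T" "f (PU r) = PU s"
proof -
  have "H_adj l k T U (f (PU r))"
    using adj_iff[of U "PU r"] fix_U assms by (simp add: H_adj_U_iff)
  then consider s where "1 \<le> s" "s \<le> k" "f (PU r) = X 1 s"
    | s where "1 \<le> s" "s \<le> k" "f (PU r) = Y1 s" | s where "1 \<le> s" "s \<le> T" "f (PU r) = PU s"
    unfolding H_adj_U_iff by blast
  then show ?thesis
  proof cases
    case (1 s)
    \<comment> \<open>x_{2,s} would be the image of a second neighbour of the pendant vertex u_r\<close>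
    then have "H_adj l k T (f (PU r)) (X 2 s)" "X 2 s \<in> H_verts l k T" "PU r \<in> H_verts l k T"
      using assms l_ge_2 by (simp_all add: H_adj_X_iff)
    then obtain b where "H_adj l k T (PU r) b" "f b = X 2 s"
      using neighbour_preimage by metis
    then show ?thesis
      using assms fix_U by (simp add: H_adj_PU_iff)
  next
    case (2 s)
    have "\<not> H_adj l k T (f (PU r)) (f Y2)"
      using adj_iff[of "PU r" Y2] assms by (simp add: H_adj_PU_iff)
    then show ?thesis
      using 2 f_Y2 by (simp add: H_adj_Y1_iff)
  qed (use that in blast)
qed

lemma f_PV: assumes "1 \<le> r" "r \<le> T" obtains s where "1 \<le> s" "s \<le> T" "f (PV r) = PV s"
proof -
  have "H_adj l k T V (f (PV r))"
    using adj_iff[of V "PV r"] f_V assms l_ge_2 by (simp add: H_adj_V_iff)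
  then consider s where "1 \<le> s" "s \<le> k" "f (PV r) = X l s"
    | s where "1 \<le> s" "s \<le> k" "f (PV r) = Y4 s" | s where "1 \<le> s" "s \<le> T" "f (PV r) = PV s"
    using H_adj_V_iff[of l k T "f (PV r)"] l_ge_2 by auto
  then show ?thesis
  proof cases
    case (1 s)
    then have "H_adj l k T (f (PV r)) (X (l - 1) s)" "X (l - 1) s \<in> H_verts l k T"
        "PV r \<in> H_verts l k T"
      using assms l_ge_2 by (simp_all add: H_adj_X_iff)
    then obtain b where "H_adj l k T (PV r) b" "f b = X (l - 1) s"
      using neighbour_preimage by metis
    then show ?thesis
      using assms f_V l_ge_2 by (simp add: H_adj_PV_iff)
  next
    case (2 s)
    have "\<not> H_adj l k T (f (PV r)) (f Y3)"
      using adj_iff[of "PV r" Y3] assms by (simp add: H_adj_PV_iff)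
    then show ?thesis
      using 2 f_Y3 by (simp add: H_adj_Y4_iff)
  qed (use that in blast)
qed

end

subsection \<open>Relabelling automorphisms\<close>

fun relabel :: "(nat \<Rightarrow> nat) \<Rightarrow> (nat \<Rightarrow> nat) \<Rightarrow> (nat \<Rightarrow> nat) \<Rightarrow> hvert \<Rightarrow> hvert" where
  "relabel \<sigma> \<alpha> \<beta> (X i r) = X i (\<sigma> r)"
| "relabel \<sigma> \<alpha> \<beta> (Y1 r) = Y1 (\<sigma> r)"
| "relabel \<sigma> \<alpha> \<beta> (Y4 r) = Y4 (\<sigma> r)"
| "relabel \<sigma> \<alpha> \<beta> (PU r) = PU (\<alpha> r)"
| "relabel \<sigma> \<alpha> \<beta> (PV r) = PV (\<beta> r)"
| "relabel \<sigma> \<alpha> \<beta> U = U"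
| "relabel \<sigma> \<alpha> \<beta> V = V"
| "relabel \<sigma> \<alpha> \<beta> Y2 = Y2"
| "relabel \<sigma> \<alpha> \<beta> Y3 = Y3"

lemma relabel_inv_relabel:
  "\<sigma> permutes A \<Longrightarrow> \<alpha> permutes B \<Longrightarrow> \<beta> permutes C \<Longrightarrow>
    relabel (inv \<sigma>) (inv \<alpha>) (inv \<beta>) (relabel \<sigma> \<alpha> \<beta> w) = w"
  by (cases w) (simp_all add: permutes_inverses)

lemma relabel_in_H_verts:
  assumes "\<sigma> permutes {1..k}" "\<alpha> permutes {1..T}" "\<beta> permutes {1..T}" "w \<in> H_verts l k T"
  shows "relabel \<sigma> \<alpha> \<beta> w \<in> H_verts l k T"
  using assms permutes_in_image[OF assms(1)] permutes_in_image[OF assms(2)]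
    permutes_in_image[OF assms(3)]
  by (cases w) simp_all

lemma relabel_H_adj:
  assumes "\<sigma> permutes {1..k}" "\<alpha> permutes {1..T}" "\<beta> permutes {1..T}" "H_adj l k T a b"
  shows "H_adj l k T (relabel \<sigma> \<alpha> \<beta> a) (relabel \<sigma> \<alpha> \<beta> b)"
proof -
  have "(relabel \<sigma> \<alpha> \<beta> p, relabel \<sigma> \<alpha> \<beta> q) \<in> H_edges l k T" if "(p, q) \<in> H_edges l k T" for p q
    using that permutes_in_image[OF assms(1)] permutes_in_image[OF assms(2)]
      permutes_in_image[OF assms(3)]
    unfolding H_edges_def by (elim UnE; force)
  then show ?thesis
    using assms(4) unfolding H_adj_def by blast
qed

lemma relabel_graph_aut:
  assumes "\<sigma> permutes {1..k}" "\<alpha> permutes {1..T}" "\<beta> permutes {1..T}"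
  shows "graph_aut (H_verts l k T) (H_adj l k T) (relabel \<sigma> \<alpha> \<beta>)"
proof -
  have inv: "inv \<sigma> permutes {1..k}" "inv \<alpha> permutes {1..T}" "inv \<beta> permutes {1..T}"
    using assms by (simp_all add: permutes_inv)
  have "relabel \<sigma> \<alpha> \<beta> (relabel (inv \<sigma>) (inv \<alpha>) (inv \<beta>) w) = w" for w
    using relabel_inv_relabel[OF inv] assms by (simp add: inv_inv_eq permutes_bij)
  then show ?thesis
    using relabel_inv_relabel[OF assms] relabel_in_H_verts[OF assms] relabel_in_H_verts[OF inv]
      relabel_H_adj[OF assms] relabel_H_adj[OF inv]
    by (intro graph_autI[where g = "relabel (inv \<sigma>) (inv \<alpha>) (inv \<beta>)"])
qed

lemma stab_orbit_H_eqI: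
  assumes "2 \<le> k" "2 \<le> l"
    and "\<And>f. H_stabiliser l k T f \<Longrightarrow> f w \<in> S"
    and "\<And>x. x \<in> S \<Longrightarrow> \<exists>\<sigma> \<alpha> \<beta>. \<sigma> permutes {1..k} \<and> \<alpha> permutes {1..T} \<and> \<beta> permutes {1..T}
           \<and> relabel \<sigma> \<alpha> \<beta> w = x"
  shows "stab_orbit (H_verts l k T) (H_adj l k T) U w = S"
proof (rule stab_orbit_eqI)
  show "f w \<in> S" if "graph_aut (H_verts l k T) (H_adj l k T) f" "f U = U" for f
    using assms(1,2) that by (intro assms(3)) unfold_locales
  show "\<exists>f. graph_aut (H_verts l k T) (H_adj l k T) f \<and> f U = U \<and> f w = x" if "x \<in> S" for x
    using assms(4)[OF that] relabel_graph_aut by fastforce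
qed

lemma stab_orbit_H_fixed:
  assumes "2 \<le> k" "2 \<le> l" and "\<And>f. H_stabiliser l k T f \<Longrightarrow> f w = w"
  shows "stab_orbit (H_verts l k T) (H_adj l k T) U w = {w}"
  using assms by (intro stab_orbit_eq_singleton assms(3)) unfold_locales

lemma stab_orbit_H_X:
  assumes "2 \<le> k" "2 \<le> l" "1 \<le> i" "i \<le> l" "1 \<le> r" "r \<le> k"
  shows "stab_orbit (H_verts l k T) (H_adj l k T) U (X i r) = {X i s | s. 1 \<le> s \<and> s \<le> k}"
proof (rule stab_orbit_H_eqI[OF assms(1,2)])
  show "f (X i r) \<in> {X i s | s. 1 \<le> s \<and> s \<le> k}" if "H_stabiliser l k T f" for f
    by (rule H_stabiliser.f_X[OF that assms(3-6)]) simp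
  show "\<exists>\<sigma> \<alpha> \<beta>. \<sigma> permutes {1..k} \<and> \<alpha> permutes {1..T} \<and> \<beta> permutes {1..T}
      \<and> relabel \<sigma> \<alpha> \<beta> (X i r) = x"
    if x: "x \<in> {X i s | s. 1 \<le> s \<and> s \<le> k}" for x
  proof -
    obtain s where s: "1 \<le> s" "s \<le> k" "x = X i s"
      using x by blast
    show ?thesis
      by (rule exI[of _ "transpose r s"], rule exI[of _ id], rule exI[of _ id])
        (use assms s in \<open>simp add: permutes_swap_id\<close>)
  qed
qed

lemma stab_orbit_H_Y1:
  assumes "2 \<le> k" "2 \<le> l" "1 \<le> r" "r \<le> k"
  shows "stab_orbit (H_verts l k T) (H_adj l k T) U (Y1 r) = {Y1 s | s. 1 \<le> s \<and> s \<le> k}"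
proof (rule stab_orbit_H_eqI[OF assms(1,2)])
  show "f (Y1 r) \<in> {Y1 s | s. 1 \<le> s \<and> s \<le> k}" if "H_stabiliser l k T f" for f
    by (rule H_stabiliser.f_Y1[OF that assms(3,4)]) simp
  show "\<exists>\<sigma> \<alpha> \<beta>. \<sigma> permutes {1..k} \<and> \<alpha> permutes {1..T} \<and> \<beta> permutes {1..T}
      \<and> relabel \<sigma> \<alpha> \<beta> (Y1 r) = x"
    if x: "x \<in> {Y1 s | s. 1 \<le> s \<and> s \<le> k}" for x
  proof -
    obtain s where s: "1 \<le> s" "s \<le> k" "x = Y1 s"
      using x by blast
    show ?thesis
      by (rule exI[of _ "transpose r s"], rule exI[of _ id], rule exI[of _ id])
        (use assms s in \<open>simp add: permutes_swap_id\<close>)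
  qed
qed

lemma stab_orbit_H_Y4:
  assumes "2 \<le> k" "2 \<le> l" "1 \<le> r" "r \<le> k"
  shows "stab_orbit (H_verts l k T) (H_adj l k T) U (Y4 r) = {Y4 s | s. 1 \<le> s \<and> s \<le> k}"
proof (rule stab_orbit_H_eqI[OF assms(1,2)])
  show "f (Y4 r) \<in> {Y4 s | s. 1 \<le> s \<and> s \<le> k}" if "H_stabiliser l k T f" for f
    by (rule H_stabiliser.f_Y4[OF that assms(3,4)]) simp
  show "\<exists>\<sigma> \<alpha> \<beta>. \<sigma> permutes {1..k} \<and> \<alpha> permutes {1..T} \<and> \<beta> permutes {1..T}
      \<and> relabel \<sigma> \<alpha> \<beta> (Y4 r) = x"
    if x: "x \<in> {Y4 s | s. 1 \<le> s \<and> s \<le> k}" for x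
  proof -
    obtain s where s: "1 \<le> s" "s \<le> k" "x = Y4 s"
      using x by blast
    show ?thesis
      by (rule exI[of _ "transpose r s"], rule exI[of _ id], rule exI[of _ id])
        (use assms s in \<open>simp add: permutes_swap_id\<close>)
  qed
qed

lemma stab_orbit_H_PU:
  assumes "2 \<le> k" "2 \<le> l" "1 \<le> r" "r \<le> T"
  shows "stab_orbit (H_verts l k T) (H_adj l k T) U (PU r) = {PU s | s. 1 \<le> s \<and> s \<le> T}"
proof (rule stab_orbit_H_eqI[OF assms(1,2)])
  show "f (PU r) \<in> {PU s | s. 1 \<le> s \<and> s \<le> T}" if "H_stabiliser l k T f" for f
    by (rule H_stabiliser.f_PU[OF that assms(3,4)]) simp
  show "\<exists>\<sigma> \<alpha> \<beta>. \<sigma> permutes {1..k} \<and> \<alpha> permutes {1..T} \<and> \<beta> permutes {1..T}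
      \<and> relabel \<sigma> \<alpha> \<beta> (PU r) = x"
    if x: "x \<in> {PU s | s. 1 \<le> s \<and> s \<le> T}" for x
  proof -
    obtain s where s: "1 \<le> s" "s \<le> T" "x = PU s"
      using x by blast
    show ?thesis
      by (rule exI[of _ id], rule exI[of _ "transpose r s"], rule exI[of _ id])
        (use assms s in \<open>simp add: permutes_swap_id\<close>)
  qed
qed

lemma stab_orbit_H_PV:
  assumes "2 \<le> k" "2 \<le> l" "1 \<le> r" "r \<le> T"
  shows "stab_orbit (H_verts l k T) (H_adj l k T) U (PV r) = {PV s | s. 1 \<le> s \<and> s \<le> T}"
proof (rule stab_orbit_H_eqI[OF assms(1,2)])
  show "f (PV r) \<in> {PV s | s. 1 \<le> s \<and> s \<le> T}" if "H_stabiliser l k T f" for f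
    by (rule H_stabiliser.f_PV[OF that assms(3,4)]) simp
  show "\<exists>\<sigma> \<alpha> \<beta>. \<sigma> permutes {1..k} \<and> \<alpha> permutes {1..T} \<and> \<beta> permutes {1..T}
      \<and> relabel \<sigma> \<alpha> \<beta> (PV r) = x"
    if x: "x \<in> {PV s | s. 1 \<le> s \<and> s \<le> T}" for x
  proof -
    obtain s where s: "1 \<le> s" "s \<le> T" "x = PV s"
      using x by blast
    show ?thesis
      by (rule exI[of _ id], rule exI[of _ id], rule exI[of _ "transpose r s"])
        (use assms s in \<open>simp add: permutes_swap_id\<close>)
  qed
qed

theorem proposition18:
  fixes l k T :: nat and t :: real
  assumes "k > 2" and "l > 6" and "t > 0" and "T = nat \<lfloor>t * real k\<rfloor>"
  defines "Orb \<equiv> stab_orbit (H_verts l k T) (H_adj l k T) U"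
  shows "(\<forall>r. 1 \<le> r \<and> r \<le> T \<longrightarrow> Orb (PU r) = {PU s | s. 1 \<le> s \<and> s \<le> T})
    \<and> Orb U = {U}
    \<and> (\<forall>i r. 1 \<le> i \<and> i \<le> l \<and> 1 \<le> r \<and> r \<le> k \<longrightarrow>
          Orb (X i r) = {X i s | s. 1 \<le> s \<and> s \<le> k})
    \<and> (\<forall>r. 1 \<le> r \<and> r \<le> k \<longrightarrow> Orb (Y1 r) = {Y1 s | s. 1 \<le> s \<and> s \<le> k})
    \<and> Orb Y2 = {Y2}
    \<and> Orb Y3 = {Y3}
    \<and> (\<forall>r. 1 \<le> r \<and> r \<le> k \<longrightarrow> Orb (Y4 r) = {Y4 s | s. 1 \<le> s \<and> s \<le> k})
    \<and> Orb V = {V}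
    \<and> (\<forall>r. 1 \<le> r \<and> r \<le> T \<longrightarrow> Orb (PV r) = {PV s | s. 1 \<le> s \<and> s \<le> T})"
proof -
  have k: "2 \<le> k" and l: "2 \<le> l"
    using assms(1,2) by simp_all
  have fixed: "Orb w = {w}" if "\<And>f. H_stabiliser l k T f \<Longrightarrow> f w = w" for w
    unfolding Orb_def using stab_orbit_H_fixed[OF k l] that by blast
  have "Orb U = {U}" "Orb Y2 = {Y2}" "Orb Y3 = {Y3}" "Orb V = {V}"
    using H_stabiliser.fix_U H_stabiliser.f_Y2 H_stabiliser.f_Y3 H_stabiliser.f_V
    by (simp_all add: fixed)
  then show ?thesis
    using stab_orbit_H_PU[OF k l] stab_orbit_H_X[OF k l] stab_orbit_H_Y1[OF k l]
      stab_orbit_H_Y4[OF k l] stab_orbit_H_PV[OF k l]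
    by (simp add: Orb_def)
qed

end
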